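(* If a connected graph $G$ has $n\ge 2$ vertices and $k$ blocks, then the graphic TSP cost of $G$ is at least $n+k-1$.
   Context: A block of a graph is a maximal biconnected subgraph (a bridge forms a trivial block). For a connected unweighted undirected graph $G=(V,E)$ with $n\ge 2$ vertices, the graphic TSP cost of $G$ is $\min \sum_{i=1}^{n} d_G(v_i,v_{i+1})$ over all cyclic orderings $(v_1,\dots,v_n)$ of $V$, with $v_{n+1}=v_1$, where $d_G$ is the shortest-path distance in $G$. *)

theory Defs
  imports Main
begin

definition graph :: "'a set \<Rightarrow> ('a \<Rightarrow> 'a \<Rightarrow> bool) \<Rightarrow> bool" where
  "graph V E \<longleftrightarrow> finite V \<and> (\<forall>x y. E x y \<longrightarrow> E y x) \<and> (\<forall>x. \<not> E x x)
     \<and> (\<forall>x y. E x y \<longrightarrow> x \<in> V \<and> y \<in> V)"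

definition connected_on :: "('a \<Rightarrow> 'a \<Rightarrow> bool) \<Rightarrow> 'a set \<Rightarrow> bool" where
  "connected_on E S \<longleftrightarrow> (\<forall>x\<in>S. \<forall>y\<in>S. (\<lambda>a b. E a b \<and> a \<in> S \<and> b \<in> S)\<^sup>*\<^sup>* x y)"

text \<open>Nonseparable (biconnected) vertex set: at least two vertices, the induced
  subgraph is connected and has no cut vertex. (K2, i.e. a bridge, qualifies.)\<close>
definition biconnected_on :: "'a set \<Rightarrow> ('a \<Rightarrow> 'a \<Rightarrow> bool) \<Rightarrow> 'a set \<Rightarrow> bool" where
  "biconnected_on V E B \<longleftrightarrow> B \<subseteq> V \<and> 2 \<le> card B \<and> connected_on E B
     \<and> (\<forall>v\<in>B. connected_on E (B - {v}))"

text \<open>Blocks: maximal biconnected subgraphs (maximal subgraphs of this kind are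
  induced, so they are identified with their vertex sets).\<close>
definition is_block :: "'a set \<Rightarrow> ('a \<Rightarrow> 'a \<Rightarrow> bool) \<Rightarrow> 'a set \<Rightarrow> bool" where
  "is_block V E B \<longleftrightarrow> biconnected_on V E B
     \<and> (\<forall>C. biconnected_on V E C \<and> B \<subseteq> C \<longrightarrow> C = B)"

definition blocks :: "'a set \<Rightarrow> ('a \<Rightarrow> 'a \<Rightarrow> bool) \<Rightarrow> 'a set set" where
  "blocks V E = {B. is_block V E B}"

definition dist :: "('a \<Rightarrow> 'a \<Rightarrow> bool) \<Rightarrow> 'a \<Rightarrow> 'a \<Rightarrow> nat" where
  "dist E u v = (LEAST n. (E ^^ n) u v)"

definition tour_cost :: "('a \<Rightarrow> 'a \<Rightarrow> bool) \<Rightarrow> 'a list \<Rightarrow> nat" where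
  "tour_cost E xs = (\<Sum>i<length xs. dist E (xs ! i) (xs ! ((i + 1) mod length xs)))"

definition tsp_cost :: "'a set \<Rightarrow> ('a \<Rightarrow> 'a \<Rightarrow> bool) \<Rightarrow> nat" where
  "tsp_cost V E = Min {tour_cost E xs | xs. distinct xs \<and> set xs = V}"

end

theory Submission
  imports Defs
begin

text \<open>An optimal tour, with consecutive vertices joined by shortest paths, is a closed walk of
  length C = tsp_cost through all n vertices. At least n - 1 of its C steps reach a vertex for the
  first time. For every block B, the last step of the walk with both ends in B instead goes back
  to a vertex visited earlier, because a walk that leaves a block can only re-enter it where it
  left. Two blocks share at most one vertex, so these steps are distinct for distinct blocks,
  whence C \<ge> (n - 1) + k.\<close>

definition walk :: "('a \<Rightarrow> 'a \<Rightarrow> bool) \<Rightarrow> (nat \<Rightarrow> 'a) \<Rightarrow> nat \<Rightarrow> nat \<Rightarrow> bool" where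
  "walk R f i j \<longleftrightarrow> (\<forall>k. i \<le> k \<and> k < j \<longrightarrow> R (f k) (f (Suc k)))"

lemma walk_subwalk: "walk R f i j \<Longrightarrow> i \<le> i' \<Longrightarrow> j' \<le> j \<Longrightarrow> walk R f i' j'"
  unfolding walk_def by auto

lemma walk_relpowp:
  assumes "walk R f i j" "i \<le> j"
  shows "(R ^^ (j - i)) (f i) (f j)"
proof -
  have "(R ^^ (j - i)) (f i) (f (i + (j - i)))"
    unfolding relpowp_fun_conv using assms(1)
    by (intro exI[of _ "\<lambda>k. f (i + k)"]) (auto simp: walk_def)
  then show ?thesis using assms(2) by simp
qed

lemma walk_rtranclp: "walk R f i j \<Longrightarrow> i \<le> j \<Longrightarrow> R\<^sup>*\<^sup>* (f i) (f j)"
  using walk_relpowp relpowp_imp_rtranclp by metis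

lemma relpowp_walk: "(R ^^ n) x y \<Longrightarrow> \<exists>f. f 0 = x \<and> f n = y \<and> walk R f 0 n"
  unfolding relpowp_fun_conv walk_def by auto

lemma shortest_walk_inj:
  assumes walk: "walk R f 0 n" and shortest: "\<forall>m<n. \<not> (R ^^ m) (f 0) (f n)"
  shows "inj_on f {0..n}"
proof -
  have "f i \<noteq> f j" if "i < j" "j \<le> n" for i j
  proof
    assume "f i = f j"
    have "walk R f 0 i" "walk R f j n"
      using walk_subwalk[OF walk] that by auto
    then have "(R ^^ i) (f 0) (f i)" "(R ^^ (n - j)) (f j) (f n)"
      using walk_relpowp that by fastforce+
    then have "(R ^^ (i + (n - j))) (f 0) (f n)"
      unfolding relpowp_add using \<open>f i = f j\<close> by auto
    then show False using shortest that by auto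
  qed
  then show ?thesis
    unfolding inj_on_def by (metis atLeastAtMost_iff linorder_neq_iff)
qed

lemma graph_edge_in_vertices: "graph V E \<Longrightarrow> E x y \<Longrightarrow> x \<in> V \<and> y \<in> V"
  unfolding graph_def by simp

lemma graph_symp: "graph V E \<Longrightarrow> symp E"
  unfolding graph_def symp_def by metis

lemma walk_in_vertices:
  assumes "graph V E" "walk E f i j" "f i \<in> V"
  shows "f ` {i..j} \<subseteq> V"
proof
  fix v assume "v \<in> f ` {i..j}"
  then obtain k where k: "i \<le> k" "k \<le> j" "v = f k" by auto
  show "v \<in> V"
  proof (cases "k = i")
    case False
    then have "i \<le> k - 1" "k - 1 < j" "Suc (k - 1) = k" using k by auto
    then have "E (f (k - 1)) (f k)" using assms(2) unfolding walk_def by (metis (no_types))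
    then show ?thesis using graph_edge_in_vertices[OF assms(1)] k by simp
  qed (use assms(3) k in simp)
qed

definition walk_append :: "(nat \<Rightarrow> 'a) \<Rightarrow> nat \<Rightarrow> (nat \<Rightarrow> 'a) \<Rightarrow> nat \<Rightarrow> 'a" where
  "walk_append f m g k = (if k \<le> m then f k else g (k - m))"

lemma walk_append_0 [simp]: "walk_append f m g 0 = f 0"
  unfolding walk_append_def by simp

lemma walk_append_end: "f m = g 0 \<Longrightarrow> walk_append f m g (m + n) = g n"
  unfolding walk_append_def by auto

lemma walk_walk_append:
  assumes "walk R f 0 m" "walk R g 0 n" "f m = g 0"
  shows "walk R (walk_append f m g) 0 (m + n)"
  unfolding walk_def walk_append_def
proof (intro allI impI)
  fix k assume "0 \<le> k \<and> k < m + n"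
  then show "R (if k \<le> m then f k else g (k - m))
      (if Suc k \<le> m then f (Suc k) else g (Suc k - m))"
    using assms unfolding walk_def
    by (cases "k < m") (auto simp: Suc_diff_le not_le dest: spec[of _ "k - m"])
qed

lemma image_walk_append:
  assumes "f m = g 0"
  shows "walk_append f m g ` {0..m + n} = f ` {0..m} \<union> g ` {0..n}"
proof (intro equalityI subsetI)
  fix v assume "v \<in> walk_append f m g ` {0..m + n}"
  then obtain k where k: "k \<le> m + n" "v = walk_append f m g k" by auto
  show "v \<in> f ` {0..m} \<union> g ` {0..n}"
  proof (cases "k \<le> m")
    case False
    then have "v = g (k - m)" "k - m \<le> n" using k unfolding walk_append_def by auto
    then show ?thesis by auto
  qed (use k in \<open>auto simp: walk_append_def\<close>)
next
  fix v assume "v \<in> f ` {0..m} \<union> g ` {0..n}"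
  then consider k where "k \<le> m" "v = f k" | k where "k \<le> n" "v = g k" by auto
  then show "v \<in> walk_append f m g ` {0..m + n}"
  proof cases
    case 1 then show ?thesis unfolding walk_append_def by (intro image_eqI[of _ _ k]) auto
  next
    case 2 then show ?thesis using walk_append_end[of f m g k, OF assms]
      by (intro image_eqI[of _ _ "m + k"]) auto
  qed
qed

lemma connected_on_Un:
  assumes "connected_on E X" "connected_on E Y" "X \<inter> Y \<noteq> {}"
  shows "connected_on E (X \<union> Y)"
proof -
  let ?R = "\<lambda>S a b. E a b \<and> a \<in> S \<and> b \<in> S"
  obtain z where z: "z \<in> X" "z \<in> Y" using assms(3) by blast
  have lift: "(?R (X \<union> Y))\<^sup>*\<^sup>* a b" if "(?R S)\<^sup>*\<^sup>* a b" "S \<subseteq> X \<union> Y" for S a b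
    using that(1) by (rule rtranclp_mono[THEN predicate2D, rotated]) (use that(2) in auto)
  have via_z: "(?R (X \<union> Y))\<^sup>*\<^sup>* x z \<and> (?R (X \<union> Y))\<^sup>*\<^sup>* z x" if "x \<in> X \<union> Y" for x
  proof (cases "x \<in> X")
    case True
    then have "(?R X)\<^sup>*\<^sup>* x z" "(?R X)\<^sup>*\<^sup>* z x" using assms(1) z unfolding connected_on_def by auto
    then show ?thesis using lift[of X] by blast
  next
    case False
    then have "(?R Y)\<^sup>*\<^sup>* x z" "(?R Y)\<^sup>*\<^sup>* z x" using assms(2) z that unfolding connected_on_def by auto
    then show ?thesis using lift[of Y] by blast
  qed
  show ?thesis
    unfolding connected_on_def
  proof (intro ballI)
    fix x y assume "x \<in> X \<union> Y" "y \<in> X \<union> Y"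
    then show "(?R (X \<union> Y))\<^sup>*\<^sup>* x y"
      using via_z[of x] via_z[of y] rtranclp_trans[of "?R (X \<union> Y)" x z y] by blast
  qed
qed

lemma connected_on_walk_image:
  assumes "symp E" "walk E f i j"
  shows "connected_on E (f ` {i..j})"
proof -
  let ?R = "\<lambda>a b. E a b \<and> a \<in> f ` {i..j} \<and> b \<in> f ` {i..j}"
  have walk: "walk ?R f i j" using assms(2) by (auto simp: walk_def)
  have forward: "?R\<^sup>*\<^sup>* (f a) (f b)" if "i \<le> a" "a \<le> b" "b \<le> j" for a b
    using walk_rtranclp[OF walk_subwalk[OF walk that(1,3)] that(2)] .
  have symp: "symp ?R\<^sup>*\<^sup>*"
    using assms(1) by (intro symp_rtranclp) (auto simp: symp_def)
  have "?R\<^sup>*\<^sup>* (f a) (f b)" if "a \<in> {i..j}" "b \<in> {i..j}" for a b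
  proof (cases "a \<le> b")
    case False
    then have "?R\<^sup>*\<^sup>* (f b) (f a)" using forward that by auto
    then show ?thesis using symp by (blast dest: sympD)
  qed (use forward that in auto)
  then show ?thesis unfolding connected_on_def by blast
qed

lemma biconnected_on_connected_minus:
  "biconnected_on V E B \<Longrightarrow> connected_on E (B - {v})"
  unfolding biconnected_on_def by (cases "v \<in> B") auto

lemma biconnected_on_finite: "biconnected_on V E B \<Longrightarrow> finite B"
  unfolding biconnected_on_def using card.infinite by fastforce

lemma biconnected_on_Un:
  assumes B: "biconnected_on V E B" and B': "biconnected_on V E B'"
    and "a \<in> B \<inter> B'" "b \<in> B \<inter> B'" "a \<noteq> b"
  shows "biconnected_on V E (B \<union> B')"
  unfolding biconnected_on_def
proof (intro conjI ballI)
  show "B \<union> B' \<subseteq> V" using B B' unfolding biconnected_on_def by auto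
  have "card B \<le> card (B \<union> B')"
    using biconnected_on_finite[OF B] biconnected_on_finite[OF B'] by (simp add: card_mono)
  then show "2 \<le> card (B \<union> B')" using B unfolding biconnected_on_def by simp
  show "connected_on E (B \<union> B')"
    using B B' assms(3) by (intro connected_on_Un) (auto simp: biconnected_on_def)
  fix v
  have "(B - {v}) \<inter> (B' - {v}) \<noteq> {}" using assms(3-5) by blast
  then have "connected_on E ((B - {v}) \<union> (B' - {v}))"
    using B B' by (intro connected_on_Un biconnected_on_connected_minus)
  then show "connected_on E (B \<union> B' - {v})" by (simp add: Un_Diff)
qed

lemma block_eqI:
  assumes "is_block V E B" "is_block V E B'" "a \<in> B \<inter> B'" "b \<in> B \<inter> B'" "a \<noteq> b"
  shows "B = B'"
proof -
  have "biconnected_on V E (B \<union> B')"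
    using assms by (intro biconnected_on_Un) (auto simp: is_block_def)
  then show ?thesis using assms(1,2) unfolding is_block_def by blast
qed

lemma connected_on_Un_walk:
  assumes "symp E" "connected_on E X" "walk E f l r" "l \<le> r" "f l \<in> X \<or> f r \<in> X"
  shows "connected_on E (X \<union> f ` {l..r})"
proof (rule connected_on_Un[OF assms(2)])
  show "connected_on E (f ` {l..r})" using assms(1,3) by (rule connected_on_walk_image)
  show "X \<inter> f ` {l..r} \<noteq> {}" using assms(4,5) by auto
qed

lemma inj_on_image_atLeastAtMost_Diff:
  assumes "inj_on f {0..n}" "k \<le> n"
  shows "f ` {0..n} - {f k} = f ` {0..<k} \<union> f ` {Suc k..n}"
proof -
  have "f ` {0..n} - {f k} = f ` ({0..n} - {k})"
    using assms by (simp add: inj_on_image_set_diff)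
  also have "{0..n} - {k} = {0..<k} \<union> {Suc k..n}" using assms(2) by auto
  finally show ?thesis by (simp add: image_Un)
qed

lemma biconnected_on_Un_path:
  assumes sym: "symp E" and B: "biconnected_on V E B"
    and f: "walk E f 0 n" "inj_on f {0..n}" "f 0 \<in> B" "f n \<in> B" "f ` {0..n} \<subseteq> V"
  shows "biconnected_on V E (B \<union> f ` {0..n})"
proof -
  have B_minus: "connected_on E (B - {v})" for v
    using B by (rule biconnected_on_connected_minus)
  have minus: "connected_on E (B \<union> f ` {0..n} - {v})" for v
  proof (cases "v \<in> f ` {0..n}")
    case False
    have "connected_on E ((B - {v}) \<union> f ` {0..n})"
      by (rule connected_on_Un_walk[OF sym B_minus f(1)]) (use False f(3) in auto)
    moreover have "B \<union> f ` {0..n} - {v} = (B - {v}) \<union> f ` {0..n}" using False by auto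
    ultimately show ?thesis by simp
  next
    case True
    then obtain k where k: "k \<le> n" "v = f k" by auto
    have left: "connected_on E ((B - {v}) \<union> f ` {0..<k})"
    proof (cases "k = 0")
      case False
      then have "{0..<k} = {0..k - 1}" "f 0 \<noteq> v" using inj_onD[OF f(2), of 0 k] k by auto
      moreover have "walk E f 0 (k - 1)" using f(1) by (rule walk_subwalk) (use k in auto)
      then have "connected_on E ((B - {v}) \<union> f ` {0..k - 1})"
        by (rule connected_on_Un_walk[OF sym B_minus]) (use f(3) \<open>f 0 \<noteq> v\<close> in auto)
      ultimately show ?thesis by simp
    qed (simp add: B_minus)
    have "connected_on E ((B - {v}) \<union> f ` {0..<k} \<union> f ` {Suc k..n})"
    proof (cases "k = n")
      case False
      then have "f n \<noteq> v" using inj_onD[OF f(2), of n k] k by auto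
      have "walk E f (Suc k) n" using f(1) by (rule walk_subwalk) auto
      then show ?thesis
        by (rule connected_on_Un_walk[OF sym left]) (use f(4) k False \<open>f n \<noteq> v\<close> in auto)
    qed (use left in simp)
    moreover have "B \<union> f ` {0..n} - {v} = (B - {v}) \<union> f ` {0..<k} \<union> f ` {Suc k..n}"
      using inj_on_image_atLeastAtMost_Diff[OF f(2) k(1)] k(2) by blast
    ultimately show ?thesis by simp
  qed
  show ?thesis
    unfolding biconnected_on_def
  proof (intro conjI ballI minus)
    show "B \<union> f ` {0..n} \<subseteq> V" using B f(5) unfolding biconnected_on_def by auto
    have "card B \<le> card (B \<union> f ` {0..n})"
      using biconnected_on_finite[OF B] by (simp add: card_mono)
    then show "2 \<le> card (B \<union> f ` {0..n})" using B unfolding biconnected_on_def by simp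
    have "connected_on E B" using B unfolding biconnected_on_def by simp
    then show "connected_on E (B \<union> f ` {0..n})"
      by (rule connected_on_Un_walk[OF sym _ f(1)]) (use f(3) in auto)
  qed
qed

text \<open>A shortest walk from x to y avoiding the edges inside B is a path whose first edge
  leaves B; adding it to B would give a strictly larger biconnected set.\<close>
lemma block_no_detour:
  assumes g: "graph V E" and B: "is_block V E B"
    and detour: "(\<lambda>a b. E a b \<and> \<not> (a \<in> B \<and> b \<in> B))\<^sup>*\<^sup>* x y" and "x \<in> B" "y \<in> B"
  shows "x = y"
proof (rule ccontr)
  assume "x \<noteq> y"
  let ?F = "\<lambda>a b. E a b \<and> \<not> (a \<in> B \<and> b \<in> B)"
  define n where "n = (LEAST n. (?F ^^ n) x y)"
  have "(?F ^^ n) x y"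
    unfolding n_def using rtranclp_imp_relpowp[OF detour] by (rule LeastI_ex)
  then obtain f where f: "f 0 = x" "f n = y" "walk ?F f 0 n" by (blast dest: relpowp_walk)
  have "\<forall>m<n. \<not> (?F ^^ m) (f 0) (f n)"
    using not_less_Least[of _ "\<lambda>n. (?F ^^ n) x y"] f(1,2) unfolding n_def by simp
  then have inj: "inj_on f {0..n}" using f(3) by (intro shortest_walk_inj)
  have "n \<noteq> 0" using f(1,2) \<open>x \<noteq> y\<close> by (metis)
  then have "?F (f 0) (f 1)" using f(3) unfolding walk_def by simp
  then have "f 1 \<notin> B" using f(1) \<open>x \<in> B\<close> by simp
  have walk: "walk E f 0 n" using f(3) unfolding walk_def by simp
  have biB: "biconnected_on V E B" using B unfolding is_block_def by simp
  then have "x \<in> V" using \<open>x \<in> B\<close> unfolding biconnected_on_def by blast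
  then have "f ` {0..n} \<subseteq> V" using walk_in_vertices[OF g walk] f(1) by simp
  then have "biconnected_on V E (B \<union> f ` {0..n})"
    using f(1,2) \<open>x \<in> B\<close> \<open>y \<in> B\<close>
    by (intro biconnected_on_Un_path[OF graph_symp[OF g] biB walk inj]) simp_all
  then have "B \<union> f ` {0..n} = B" using B unfolding is_block_def by blast
  then show False using \<open>f 1 \<notin> B\<close> \<open>n \<noteq> 0\<close> by auto
qed

lemma card_le_first_visits:
  assumes "finite V" "W 0 \<in> V" "V \<subseteq> W ` {0..C}"
  shows "card V \<le> card {j. j < C \<and> W (Suc j) \<notin> W ` {0..j}} + 1"
proof -
  let ?N = "{j. j < C \<and> W (Suc j) \<notin> W ` {0..j}}"
  have "V - {W 0} \<subseteq> (\<lambda>j. W (Suc j)) ` ?N"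
  proof
    fix v assume v: "v \<in> V - {W 0}"
    then obtain k where k: "k \<le> C" "W k = v" using assms(3) by auto
    define i where "i = (LEAST i. W i = v)"
    have "W i = v" "i \<le> k" unfolding i_def using k(2) by (auto intro: LeastI Least_le)
    have earlier: "W l \<noteq> v" if "l < i" for l
      using not_less_Least[of l "\<lambda>i. W i = v"] that unfolding i_def by blast
    have "i \<noteq> 0" using \<open>W i = v\<close> v by (metis DiffD2 singletonI)
    then obtain j where j: "i = Suc j" using not0_implies_Suc by blast
    have "W (Suc j) \<notin> W ` {0..j}"
      using earlier \<open>W i = v\<close> unfolding j by (force simp: less_Suc_eq_le)
    then show "v \<in> (\<lambda>j. W (Suc j)) ` ?N"
      using \<open>W i = v\<close> \<open>i \<le> k\<close> k(1) j by auto
  qed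
  have "finite ?N" by simp
  have "card (V - {W 0}) \<le> card ((\<lambda>j. W (Suc j)) ` ?N)"
    using \<open>V - {W 0} \<subseteq> _\<close> \<open>finite ?N\<close> by (intro card_mono finite_imageI)
  also have "\<dots> \<le> card ?N" by (rule card_image_le[OF \<open>finite ?N\<close>])
  finally show ?thesis using assms(1,2) by (simp add: card_Diff_singleton)
qed

lemma block_has_inner_step:
  assumes g: "graph V E" and B: "is_block V E B"
    and W: "walk E W 0 C" "B \<subseteq> W ` {0..C}"
  shows "\<exists>j<C. W j \<in> B \<and> W (Suc j) \<in> B"
proof (rule ccontr)
  assume no_step: "\<not> ?thesis"
  let ?F = "\<lambda>a b. E a b \<and> \<not> (a \<in> B \<and> b \<in> B)"
  have outside: "?F\<^sup>*\<^sup>* (W p) (W q)" if "p \<le> q" "q \<le> C" for p q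
  proof (rule walk_rtranclp[OF _ that(1)])
    show "walk ?F W p q" using W(1) no_step that unfolding walk_def by auto
  qed
  have biB: "biconnected_on V E B" using B unfolding is_block_def by simp
  then have "\<not> card B \<le> Suc 0" unfolding biconnected_on_def by simp
  then obtain x y where xy: "x \<in> B" "y \<in> B" "x \<noteq> y"
    using card_le_Suc0_iff_eq[OF biconnected_on_finite[OF biB]] by blast
  then have "x \<in> W ` {0..C}" "y \<in> W ` {0..C}" using W(2) by blast+
  then obtain a b where ab: "a \<le> C" "b \<le> C" "W a = x" "W b = y"
    by (metis atLeastAtMost_iff imageE)
  have "?F\<^sup>*\<^sup>* x y \<or> ?F\<^sup>*\<^sup>* y x"
    using outside[of a b] outside[of b a] ab by (cases "a \<le> b") simp_all
  then show False
    using block_no_detour[OF g B, of x y] block_no_detour[OF g B, of y x] xy by blast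
qed

text \<open>The last step of a closed covering walk inside a block B returns to a vertex seen
  before: from there the walk runs outside B back to its start and on to its first visit of B,
  so by block_no_detour it arrives exactly at that first visit.\<close>
lemma block_last_step_revisits:
  assumes g: "graph V E" and B: "is_block V E B"
    and W: "walk E W 0 C" "W C = W 0" "V \<subseteq> W ` {0..C}"
  shows "\<exists>j<C. W j \<in> B \<and> W (Suc j) \<in> B \<and> W (Suc j) \<in> W ` {0..j}"
proof -
  let ?F = "\<lambda>a b. E a b \<and> \<not> (a \<in> B \<and> b \<in> B)"
  define S where "S = {j. j < C \<and> W j \<in> B \<and> W (Suc j) \<in> B}"
  have outside: "?F\<^sup>*\<^sup>* (W p) (W q)" if "p \<le> q" "q \<le> C" "\<forall>k. p \<le> k \<and> k < q \<longrightarrow> k \<notin> S" for p q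
  proof (rule walk_rtranclp[OF _ that(1)])
    show "walk ?F W p q" using W(1) that unfolding walk_def S_def by auto
  qed
  have "B \<subseteq> V" using B unfolding is_block_def biconnected_on_def by simp
  then have "S \<noteq> {}"
    using block_has_inner_step[OF g B W(1)] W(3) unfolding S_def by blast
  define t where "t = Max S"
  have "finite S" unfolding S_def by simp
  then have "t \<in> S" using \<open>S \<noteq> {}\<close> unfolding t_def by simp
  have after: "k \<notin> S" if "t < k" for k
    using \<open>finite S\<close> that unfolding t_def by (auto dest: Max_ge)
  define s where "s = (LEAST s. W s \<in> B)"
  have "W s \<in> B" "s \<le> t"
    using \<open>t \<in> S\<close> unfolding s_def S_def by (auto intro: LeastI Least_le)
  have before: "k \<notin> S" if "k < s" for k
    using not_less_Least[of k "\<lambda>s. W s \<in> B"] that unfolding s_def S_def by auto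
  have "?F\<^sup>*\<^sup>* (W (Suc t)) (W C)"
    using \<open>t \<in> S\<close> after by (intro outside) (auto simp: S_def)
  moreover have "?F\<^sup>*\<^sup>* (W 0) (W s)"
    using \<open>s \<le> t\<close> \<open>t \<in> S\<close> before by (intro outside) (auto simp: S_def)
  ultimately have "?F\<^sup>*\<^sup>* (W (Suc t)) (W s)" using W(2) by simp
  then have "W (Suc t) = W s"
    using block_no_detour[OF g B, of "W (Suc t)" "W s"] \<open>W s \<in> B\<close> \<open>t \<in> S\<close>
    unfolding S_def by blast
  then show ?thesis using \<open>t \<in> S\<close> \<open>s \<le> t\<close> unfolding S_def by auto
qed

lemma closed_walk_length_bound:
  assumes g: "graph V E"
    and W: "walk E W 0 C" "W C = W 0" "V \<subseteq> W ` {0..C}" "W 0 \<in> V"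
  shows "card V + card (blocks V E) \<le> C + 1"
proof -
  define N where "N = {j. j < C \<and> W (Suc j) \<notin> W ` {0..j}}"
  define R where "R = {j. j < C \<and> W (Suc j) \<in> W ` {0..j}}"
  have "N \<union> R = {..<C}" "N \<inter> R = {}" unfolding N_def R_def by auto
  then have "card N + card R = C"
    by (metis card_Un_disjoint card_lessThan finite_Un finite_lessThan)
  have "finite V" using g unfolding graph_def by blast
  then have "card V \<le> card N + 1"
    unfolding N_def using W(4,3) by (rule card_le_first_visits)
  have "\<forall>B \<in> blocks V E. \<exists>j. j \<in> R \<and> W j \<in> B \<and> W (Suc j) \<in> B"
    using block_last_step_revisits[OF g _ W(1-3)] unfolding blocks_def R_def by blast
  from bchoice[OF this] obtain t
    where t: "\<forall>B \<in> blocks V E. t B \<in> R \<and> W (t B) \<in> B \<and> W (Suc (t B)) \<in> B" ..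
  have "inj_on t (blocks V E)"
  proof
    fix B B' assume B: "B \<in> blocks V E" "B' \<in> blocks V E" and "t B = t B'"
    have "t B < C" using t B(1) unfolding R_def by simp
    then have "E (W (t B)) (W (Suc (t B)))" using W(1) unfolding walk_def by simp
    moreover have "\<forall>x. \<not> E x x" using g unfolding graph_def by blast
    ultimately have "W (t B) \<noteq> W (Suc (t B))" by metis
    then show "B = B'"
      using block_eqI[of V E B B' "W (t B)" "W (Suc (t B))"] t B \<open>t B = t B'\<close>
      unfolding blocks_def by auto
  qed
  moreover have "t ` blocks V E \<subseteq> R" using t by auto
  moreover have "finite R" unfolding R_def by simp
  ultimately have "card (blocks V E) \<le> card R" by (rule card_inj_on_le)
  then show ?thesis using \<open>card V \<le> card N + 1\<close> \<open>card N + card R = C\<close> by linarith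
qed

lemma dist_walk:
  assumes "connected_on E V" "u \<in> V" "v \<in> V"
  shows "\<exists>P. P 0 = u \<and> P (dist E u v) = v \<and> walk E P 0 (dist E u v)"
proof -
  have "(\<lambda>a b. E a b \<and> a \<in> V \<and> b \<in> V)\<^sup>*\<^sup>* u v"
    using assms unfolding connected_on_def by blast
  then have "E\<^sup>*\<^sup>* u v" by (rule rtranclp_mono[THEN predicate2D, rotated]) auto
  then have "(E ^^ dist E u v) u v"
    unfolding dist_def by (rule LeastI_ex[OF rtranclp_imp_relpowp])
  then show ?thesis by (rule relpowp_walk)
qed

definition route_cost :: "('a \<Rightarrow> 'a \<Rightarrow> bool) \<Rightarrow> 'a list \<Rightarrow> nat" where
  "route_cost E ys = (\<Sum>i<length ys - 1. dist E (ys ! i) (ys ! Suc i))"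

lemma route_cost_singleton [simp]: "route_cost E [x] = 0"
  unfolding route_cost_def by simp

lemma route_cost_Cons_Cons [simp]:
  "route_cost E (x # y # zs) = dist E x y + route_cost E (y # zs)"
  unfolding route_cost_def by (simp add: sum.lessThan_Suc_shift del: sum.lessThan_Suc)

lemma tour_cost_eq_route_cost:
  assumes "xs \<noteq> []"
  shows "tour_cost E xs = route_cost E (xs @ [hd xs])"
  unfolding tour_cost_def route_cost_def
proof (rule sym, rule sum.cong)
  fix i assume "i \<in> {..<length xs}"
  then have "(xs @ [hd xs]) ! Suc i = xs ! ((i + 1) mod length xs)"
  proof (cases "Suc i < length xs")
    case False
    then have "Suc i = length xs" using \<open>i \<in> {..<length xs}\<close> by simp
    then show ?thesis using assms by (simp add: nth_append hd_conv_nth)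
  qed (simp add: nth_append)
  then show "dist E ((xs @ [hd xs]) ! i) ((xs @ [hd xs]) ! Suc i)
      = dist E (xs ! i) (xs ! ((i + 1) mod length xs))"
    using \<open>i \<in> {..<length xs}\<close> by (simp add: nth_append)
qed simp

lemma walk_through_list:
  assumes "connected_on E V"
  shows "set ys \<subseteq> V \<Longrightarrow> ys \<noteq> [] \<Longrightarrow> \<exists>W. W 0 = hd ys \<and> W (route_cost E ys) = last ys
    \<and> walk E W 0 (route_cost E ys) \<and> set ys \<subseteq> W ` {0..route_cost E ys}"
proof (induction ys rule: induct_list012)
  case (2 x)
  show ?case by (intro exI[of _ "\<lambda>_. x"]) (simp add: walk_def)
next
  case (3 x y zs)
  from "3.IH"(2) "3.prems"(1) obtain W' where W':
    "W' 0 = y" "W' (route_cost E (y # zs)) = last (y # zs)"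
    "walk E W' 0 (route_cost E (y # zs))" "set (y # zs) \<subseteq> W' ` {0..route_cost E (y # zs)}"
    by auto
  from dist_walk[OF assms, of x y] "3.prems"(1) obtain P where P:
    "P 0 = x" "P (dist E x y) = y" "walk E P 0 (dist E x y)"
    by auto
  let ?W = "walk_append P (dist E x y) W'"
  have link: "P (dist E x y) = W' 0" using P W' by simp
  show ?case
  proof (intro exI conjI)
    show "?W 0 = hd (x # y # zs)" using P by simp
    show "?W (route_cost E (x # y # zs)) = last (x # y # zs)"
      using walk_append_end[of P "dist E x y" W', OF link] W'(2) by simp
    show "walk E ?W 0 (route_cost E (x # y # zs))"
      using walk_walk_append[OF P(3) W'(3) link] by simp
    have "x \<in> P ` {0..dist E x y}" using P(1) by force
    then show "set (x # y # zs) \<subseteq> ?W ` {0..route_cost E (x # y # zs)}"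
      using image_walk_append[of P "dist E x y" W', OF link] W'(4) by auto
  qed
qed simp

lemma tour_closed_walk:
  assumes "connected_on E V" "set xs \<subseteq> V" "xs \<noteq> []"
  shows "\<exists>W. W 0 = hd xs \<and> W (tour_cost E xs) = hd xs
    \<and> walk E W 0 (tour_cost E xs) \<and> set xs \<subseteq> W ` {0..tour_cost E xs}"
proof -
  have "hd xs \<in> V" using assms(2,3) by auto
  then show ?thesis
    using walk_through_list[OF assms(1), of "xs @ [hd xs]"] assms(2,3)
    by (auto simp: tour_cost_eq_route_cost)
qed

lemma tsp_cost_attained:
  assumes "finite V"
  obtains xs where "distinct xs" "set xs = V" "tsp_cost V E = tour_cost E xs"
proof -
  let ?T = "{xs. distinct xs \<and> set xs = V}"
  have "finite ?T" using finite_subset_distinct[OF assms] by (rule finite_subset[rotated]) auto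
  moreover have "?T \<noteq> {}" using finite_distinct_list[OF assms] by auto
  moreover have "{tour_cost E xs | xs. distinct xs \<and> set xs = V} = tour_cost E ` ?T" by auto
  ultimately have "tsp_cost V E \<in> tour_cost E ` ?T"
    unfolding tsp_cost_def by simp
  then show ?thesis using that by blast
qed

theorem mainTheorem8:
  fixes V :: "'a set" and E :: "'a \<Rightarrow> 'a \<Rightarrow> bool"
  assumes "graph V E"
    and "connected_on E V"
    and "card V \<ge> 2"
  shows "tsp_cost V E \<ge> card V + card (blocks V E) - 1"
proof -
  have "finite V" using assms(1) unfolding graph_def by blast
  then obtain xs where xs: "distinct xs" "set xs = V" "tsp_cost V E = tour_cost E xs"
    by (rule tsp_cost_attained)
  have "xs \<noteq> []" using xs(2) assms(3) by auto
  from tour_closed_walk[OF assms(2) equalityD1[OF xs(2)] this] obtain W where W: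
    "W 0 = hd xs" "W (tour_cost E xs) = hd xs"
    "walk E W 0 (tour_cost E xs)" "set xs \<subseteq> W ` {0..tour_cost E xs}"
    by blast
  have "card V + card (blocks V E) \<le> tour_cost E xs + 1"
    using W xs(2) \<open>xs \<noteq> []\<close> by (intro closed_walk_length_bound[OF assms(1)]) auto
  then show ?thesis using xs(3) by simp
qed

end
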